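(* Let $Z$ be a compact metrisable space and $\mathfrak{X}$ a $Z$-valued switched Bebutov shift. Let $(\psi_n)_{n=1}^\infty$ be a sequence in $\mathfrak{X}$, and suppose there is a strictly increasing unbounded real sequence $(\tau_n)_{n=0}^\infty$ with $\tau_0=0$ such that $\psi_n(\tau_n)=\psi_{n+1}(\tau_n)$ for each $n\ge1$. Let $\xi\colon[0,\infty)\to Z$ be the function which coincides with $\psi_n$ on $[\tau_{n-1},\tau_n]$ for each $n\ge1$. Then $\xi\in\mathfrak{X}$.
   Context: $C([0,\infty),Z)$ carries the compact-open topology (uniform convergence on compact sets). $(\sigma^\tau\phi)(t)\coloneq\phi(\tau+t)$. A $Z$-valued Bebutov shift is a set $\mathfrak{X}\subseteq C([0,\infty),Z)$, compact in the compact-open topology, with $\sigma^\tau\phi\in\mathfrak{X}$ for all $\phi\in\mathfrak{X}$, $\tau\ge0$. It is switched if moreover: whenever $\phi_1,\phi_2\in\mathfrak{X}$ satisfy $\phi_1(\tau)=\phi_2(\tau)$ for some $\tau>0$, the function $\psi$ equal to $\phi_1$ on $[0,\tau]$ and to $\phi_2$ on $[\tau,\infty)$ belongs to $\mathfrak{X}$. *)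

theory Defs
  imports "HOL-Analysis.Analysis"
begin

text \<open>Elements of C([0,\<infinity>),Z) are represented as functions real \<Rightarrow> 'z that are
continuous on [0,\<infinity>) and extensional (equal to undefined) on the negative reals.\<close>

definition Cpos :: "(real \<Rightarrow> 'z::metric_space) set" where
  "Cpos = {\<phi>. continuous_on {0..} \<phi> \<and> (\<forall>t<0. \<phi> t = undefined)}"

text \<open>Compact-open topology = topology of uniform convergence on compact sets
(Z metric): U is open iff around each of its points it contains a basic
neighbourhood {\<psi>. sup over [0,T] of dist < \<epsilon>}.\<close>

definition co_open :: "(real \<Rightarrow> 'z::metric_space) set \<Rightarrow> bool" where
  "co_open U \<longleftrightarrow> U \<subseteq> Cpos \<and>
     (\<forall>\<phi>\<in>U. \<exists>T>0. \<exists>e>0. {\<psi>\<in>Cpos. \<forall>t\<in>{0..T}. dist (\<phi> t) (\<psi> t) < e} \<subseteq> U)"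

lemma nb_mono:
  fixes \<phi> :: "real \<Rightarrow> 'z::metric_space"
  assumes "T \<le> T'" "e' \<le> e"
  shows "{\<psi>\<in>C. \<forall>t\<in>{0..T'}. dist (\<phi> t) (\<psi> t) < e'} \<subseteq> {\<psi>\<in>C. \<forall>t\<in>{0..T}. dist (\<phi> t) (\<psi> t) < e}"
proof
  fix \<psi> assume h: "\<psi> \<in> {\<psi>\<in>C. \<forall>t\<in>{0..T'}. dist (\<phi> t) (\<psi> t) < e'}"
  show "\<psi> \<in> {\<psi>\<in>C. \<forall>t\<in>{0..T}. dist (\<phi> t) (\<psi> t) < e}"
  proof -
    have "\<forall>t\<in>{0..T}. dist (\<phi> t) (\<psi> t) < e"
    proof
      fix t :: real assume "t \<in> {0..T}"
      then have "dist (\<phi> t) (\<psi> t) < e'" using h assms(1) by simp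
      then show "dist (\<phi> t) (\<psi> t) < e" using assms(2) by linarith
    qed
    then show ?thesis using h by simp
  qed
qed

lemma istopology_co_open: "istopology co_open"
  unfolding istopology_def
proof (intro conjI allI impI)
  fix S T :: "(real \<Rightarrow> 'a) set"
  assume "co_open S" "co_open T"
  then have S: "S \<subseteq> Cpos" "\<forall>\<phi>\<in>S. \<exists>T>0. \<exists>e>0. {\<psi>\<in>Cpos. \<forall>t\<in>{0..T}. dist (\<phi> t) (\<psi> t) < e} \<subseteq> S"
    and T: "T \<subseteq> Cpos" "\<forall>\<phi>\<in>T. \<exists>T'>0. \<exists>e>0. {\<psi>\<in>Cpos. \<forall>t\<in>{0..T'}. dist (\<phi> t) (\<psi> t) < e} \<subseteq> T"
    unfolding co_open_def by auto
  show "co_open (S \<inter> T)"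
    unfolding co_open_def
  proof (intro conjI ballI)
    show "S \<inter> T \<subseteq> Cpos" using S by auto
    fix \<phi> assume p: "\<phi> \<in> S \<inter> T"
    from S p obtain T1 e1 where 1: "T1>0" "e1>0" "{\<psi>\<in>Cpos. \<forall>t\<in>{0..T1}. dist (\<phi> t) (\<psi> t) < e1} \<subseteq> S" by blast
    from T p obtain T2 e2 where 2: "T2>0" "e2>0" "{\<psi>\<in>Cpos. \<forall>t\<in>{0..T2}. dist (\<phi> t) (\<psi> t) < e2} \<subseteq> T" by blast
    show "\<exists>T'>0. \<exists>e>0. {\<psi>\<in>Cpos. \<forall>t\<in>{0..T'}. dist (\<phi> t) (\<psi> t) < e} \<subseteq> S \<inter> T"
    proof -
      have A: "{\<psi>\<in>Cpos. \<forall>t\<in>{0..max T1 T2}. dist (\<phi> t) (\<psi> t) < min e1 e2}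
            \<subseteq> {\<psi>\<in>Cpos. \<forall>t\<in>{0..T1}. dist (\<phi> t) (\<psi> t) < e1}" by (rule nb_mono) auto
      have B: "{\<psi>\<in>Cpos. \<forall>t\<in>{0..max T1 T2}. dist (\<phi> t) (\<psi> t) < min e1 e2}
            \<subseteq> {\<psi>\<in>Cpos. \<forall>t\<in>{0..T2}. dist (\<phi> t) (\<psi> t) < e2}" by (rule nb_mono) auto
      have C: "max T1 T2 > 0" "min e1 e2 > 0" using 1 2 by auto
      have "{\<psi>\<in>Cpos. \<forall>t\<in>{0..max T1 T2}. dist (\<phi> t) (\<psi> t) < min e1 e2} \<subseteq> S \<inter> T"
        using A B 1(3) 2(3) by (meson Int_greatest order_trans)
      then show ?thesis using C by blast
    qed
  qed
next
  fix K :: "(real \<Rightarrow> 'a) set set"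
  assume "\<forall>S\<in>K. co_open S"
  then have K: "\<And>S. S \<in> K \<Longrightarrow> S \<subseteq> Cpos \<and> (\<forall>\<phi>\<in>S. \<exists>T>0. \<exists>e>0. {\<psi>\<in>Cpos. \<forall>t\<in>{0..T}. dist (\<phi> t) (\<psi> t) < e} \<subseteq> S)"
    unfolding co_open_def by blast
  show "co_open (\<Union>K)" unfolding co_open_def
  proof (intro conjI ballI)
    show "\<Union>K \<subseteq> Cpos" using K by blast
    fix \<phi> assume "\<phi> \<in> \<Union>K"
    then obtain S where S: "S \<in> K" "\<phi> \<in> S" by blast
    then obtain T e where "T>0" "e>0" "{\<psi>\<in>Cpos. \<forall>t\<in>{0..T}. dist (\<phi> t) (\<psi> t) < e} \<subseteq> S"
      using K by blast
    moreover have "S \<subseteq> \<Union>K" using S by blast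
    ultimately show "\<exists>T>0. \<exists>e>0. {\<psi>\<in>Cpos. \<forall>t\<in>{0..T}. dist (\<phi> t) (\<psi> t) < e} \<subseteq> \<Union>K"
      by blast
  qed
qed

definition co_topology :: "(real \<Rightarrow> 'z::metric_space) topology" where
  "co_topology = topology co_open"

definition bshift :: "real \<Rightarrow> (real \<Rightarrow> 'z) \<Rightarrow> (real \<Rightarrow> 'z)" where
  "bshift \<tau> \<phi> = (\<lambda>t. if t < 0 then undefined else \<phi> (\<tau> + t))"

definition bebutov_shift :: "(real \<Rightarrow> 'z::metric_space) set \<Rightarrow> bool" where
  "bebutov_shift X \<longleftrightarrow> X \<subseteq> Cpos \<and> compactin co_topology X \<and>
     (\<forall>\<phi>\<in>X. \<forall>\<tau>\<ge>0. bshift \<tau> \<phi> \<in> X)"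

definition switched_bebutov_shift :: "(real \<Rightarrow> 'z::metric_space) set \<Rightarrow> bool" where
  "switched_bebutov_shift X \<longleftrightarrow> bebutov_shift X \<and>
     (\<forall>\<phi>1\<in>X. \<forall>\<phi>2\<in>X. \<forall>\<tau>>0. \<phi>1 \<tau> = \<phi>2 \<tau> \<longrightarrow>
        (\<lambda>t. if t < 0 then undefined else if t \<le> \<tau> then \<phi>1 t else \<phi>2 t) \<in> X)"

end

theory Submission
  imports Defs
begin

text \<open>Gluing the \<open>\<psi>\<^sub>n\<close> one switching time at a time gives members of \<open>X\<close> that agree
  with \<open>\<xi>\<close> on \<open>[0, \<tau>\<^sub>n]\<close> for every \<open>n\<close>. A compact set in the compact-open topology
  contains every such function: otherwise the open sets \<open>{\<phi>. \<phi> t \<noteq> \<xi> t}\<close>, \<open>t \<ge> 0\<close>,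
  would cover it, a finite subcover involves only times up to some bound \<open>M\<close>, and a
  member of \<open>X\<close> agreeing with \<open>\<xi>\<close> on \<open>[0, M]\<close> lies in none of them.
  Neither the compactness of \<open>Z\<close> nor the matching condition \<open>\<psi>\<^sub>n(\<tau>\<^sub>n) = \<psi>\<^sub>n\<^sub>+\<^sub>1(\<tau>\<^sub>n)\<close>
  (which follows from the description of \<open>\<xi>\<close>) is needed.\<close>

lemma openin_co_topology: "openin co_topology U \<longleftrightarrow> co_open U"
  unfolding co_topology_def using istopology_co_open topology_inverse' by metis

lemma topspace_co_topology: "topspace co_topology = Cpos"
proof
  show "topspace co_topology \<subseteq> Cpos"
    unfolding topspace_def openin_co_topology co_open_def by blast
  have "co_open Cpos"
    unfolding co_open_def by (auto intro!: exI[of _ 1])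
  then show "Cpos \<subseteq> topspace co_topology"
    using openin_co_topology openin_subset by metis
qed

lemma co_open_neq_at:
  assumes "t \<ge> 0"
  shows "co_open {\<phi>\<in>Cpos. \<phi> t \<noteq> z}"
  unfolding co_open_def
proof (intro conjI ballI)
  fix \<phi> assume \<phi>: "\<phi> \<in> {\<phi>\<in>Cpos. \<phi> t \<noteq> z}"
  have "{\<psi>\<in>Cpos. \<forall>s\<in>{0..t+1}. dist (\<phi> s) (\<psi> s) < dist (\<phi> t) z} \<subseteq> {\<phi>\<in>Cpos. \<phi> t \<noteq> z}"
    using assms by auto
  then show "\<exists>T>0. \<exists>e>0. {\<psi>\<in>Cpos. \<forall>s\<in>{0..T}. dist (\<phi> s) (\<psi> s) < e} \<subseteq> {\<phi>\<in>Cpos. \<phi> t \<noteq> z}"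
    using assms \<phi> by (intro exI[of _ "t+1"] conjI exI[of _ "dist (\<phi> t) z"]) auto
qed auto

lemma compactin_co_topology_initial_agreement:
  assumes X: "compactin co_topology X"
    and \<xi>: "\<forall>t<0. \<xi> t = undefined"
    and agree: "\<forall>T. \<exists>\<phi>\<in>X. \<forall>t\<in>{0..T}. \<phi> t = \<xi> t"
  shows "\<xi> \<in> X"
proof (rule ccontr)
  assume "\<xi> \<notin> X"
  define U where "U t = {\<phi>\<in>Cpos. \<phi> t \<noteq> \<xi> t}" for t
  have XC: "X \<subseteq> Cpos"
    using X compactin_subset_topspace topspace_co_topology by metis
  have "X \<subseteq> \<Union>(U ` {0..})"
  proof
    fix \<phi> assume \<phi>: "\<phi> \<in> X"
    with \<open>\<xi> \<notin> X\<close> have "\<phi> \<noteq> \<xi>" by blast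
    then obtain t where t: "\<phi> t \<noteq> \<xi> t" by auto
    have "\<forall>s<0. \<phi> s = undefined"
      using \<phi> XC unfolding Cpos_def by blast
    with t \<xi> have "t \<ge> 0" by (metis not_le)
    with t show "\<phi> \<in> \<Union>(U ` {0..})"
      using \<phi> XC unfolding U_def by auto
  qed
  moreover have "\<forall>B\<in>U ` {0..}. openin co_topology B"
    unfolding U_def openin_co_topology using co_open_neq_at by auto
  ultimately obtain F where F: "finite F" "F \<subseteq> U ` {0..}" "X \<subseteq> \<Union>F"
    using X unfolding compactin_def by metis
  then obtain S where S: "S \<subseteq> {0..}" "finite S" "F = U ` S"
    using finite_subset_image by metis
  obtain \<phi> where "\<phi> \<in> X" and \<phi>: "\<forall>t\<in>{0..Max (insert 0 S)}. \<phi> t = \<xi> t"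
    using agree by blast
  with F S obtain t where "t \<in> S" "\<phi> \<in> U t" by auto
  moreover from F S \<open>t \<in> S\<close> have "t \<in> {0..Max (insert 0 S)}" by auto
  ultimately show False
    using \<phi> unfolding U_def by auto
qed

lemma switched_bebutov_shift_glue:
  assumes X: "switched_bebutov_shift X"
    and "\<phi> \<in> X" "\<phi>' \<in> X" "0 < a" "a \<le> b"
    and \<phi>: "\<forall>t\<in>{0..a}. \<phi> t = \<xi> t" and \<phi>': "\<forall>t\<in>{a..b}. \<phi>' t = \<xi> t"
  shows "\<exists>\<phi>''\<in>X. \<forall>t\<in>{0..b}. \<phi>'' t = \<xi> t"
proof
  let ?\<phi>'' = "\<lambda>t. if t < 0 then undefined else if t \<le> a then \<phi> t else \<phi>' t"
  have "\<phi> a = \<phi>' a"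
    using \<phi> \<phi>' \<open>0 < a\<close> \<open>a \<le> b\<close> by simp
  then show "?\<phi>'' \<in> X"
    using X \<open>\<phi> \<in> X\<close> \<open>\<phi>' \<in> X\<close> \<open>0 < a\<close> unfolding switched_bebutov_shift_def by blast
  show "\<forall>t\<in>{0..b}. ?\<phi>'' t = \<xi> t"
    using \<phi> \<phi>' by auto
qed

lemma switched_bebutov_shift_concatenation:
  assumes X: "switched_bebutov_shift X"
    and \<psi>: "\<forall>n\<ge>1. \<psi> n \<in> X"
    and \<tau>: "strict_mono \<tau>" "\<tau> 0 = 0"
    and \<xi>: "\<forall>n\<ge>1. \<forall>t\<in>{\<tau> (n - 1)..\<tau> n}. \<xi> t = \<psi> n t"
  shows "\<exists>\<phi>\<in>X. \<forall>t\<in>{0..\<tau> (Suc k)}. \<phi> t = \<xi> t"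
proof (induction k)
  case 0
  show ?case
    using \<psi> \<xi> \<tau>(2) by (metis One_nat_def diff_Suc_1 le_refl)
next
  case (Suc k)
  then obtain \<phi> where "\<phi> \<in> X" "\<forall>t\<in>{0..\<tau> (Suc k)}. \<phi> t = \<xi> t" by blast
  moreover have "\<psi> (Suc (Suc k)) \<in> X"
    using \<psi> by simp
  moreover have "\<forall>t\<in>{\<tau> (Suc k)..\<tau> (Suc (Suc k))}. \<psi> (Suc (Suc k)) t = \<xi> t"
    using \<xi> by (metis diff_Suc_1 le_add1 plus_1_eq_Suc)
  moreover have "0 < \<tau> (Suc k)" "\<tau> (Suc k) \<le> \<tau> (Suc (Suc k))"
    using \<tau> by (metis strict_mono_less zero_less_Suc, simp add: strict_mono_leD)
  ultimately show ?case
    using switched_bebutov_shift_glue[OF X] by blast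
qed

theorem lemma2p19:
  fixes X :: "(real \<Rightarrow> 'z::metric_space) set"
    and \<psi> :: "nat \<Rightarrow> real \<Rightarrow> 'z"
    and \<tau> :: "nat \<Rightarrow> real"
    and \<xi> :: "real \<Rightarrow> 'z"
  assumes "compact (UNIV :: 'z set)"
    and "switched_bebutov_shift X"
    and "\<forall>n\<ge>1. \<psi> n \<in> X"
    and "strict_mono \<tau>" and "\<forall>M. \<exists>n. \<tau> n > M" and "\<tau> 0 = 0"
    and "\<forall>n\<ge>1. \<psi> n (\<tau> n) = \<psi> (Suc n) (\<tau> n)"
    and "\<forall>n\<ge>1. \<forall>t\<in>{\<tau> (n - 1)..\<tau> n}. \<xi> t = \<psi> n t"
    and "\<forall>t<0. \<xi> t = undefined"
  shows "\<xi> \<in> X"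
proof (rule compactin_co_topology_initial_agreement)
  show "compactin co_topology X"
    using assms(2) unfolding switched_bebutov_shift_def bebutov_shift_def by blast
  show "\<forall>T. \<exists>\<phi>\<in>X. \<forall>t\<in>{0..T}. \<phi> t = \<xi> t"
  proof
    fix T
    obtain n where "T < \<tau> n"
      using assms(5) by blast
    also have "\<tau> n \<le> \<tau> (Suc n)"
      using assms(4) by (simp add: strict_mono_leD)
    finally show "\<exists>\<phi>\<in>X. \<forall>t\<in>{0..T}. \<phi> t = \<xi> t"
      using switched_bebutov_shift_concatenation[OF assms(2,3,4,6,8), of n]
      by (meson atLeastAtMost_iff less_imp_le order_trans)
  qed
qed (use assms(9) in blast)

end
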